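(* Let $\varphi:[-1,1]\to[0,\infty)$ be a non-decreasing right-continuous function with $\varphi\equiv0$ on $[-1,0)$ and $\varphi$ constant on $[1/\sqrt5,1]$, and let $d\varphi$ be the non-negative Radon measure on $[-1,1]$ with $d\varphi([-1,t])=\varphi(t)$ for all $t\in[-1,1]$ (so $\mathrm{supp}(d\varphi)\subset[0,1/\sqrt5]$). Then \[ P_{\mathcal{A}_+}(\varphi)=A_\varphi+B_\varphi t+C_\varphi t^2, \] where \[ A_\varphi=\int_{[0,1/\sqrt5]}\tfrac18(4-9a+5a^3)\,d\varphi(a),\quad B_\varphi=\int_{[0,1/\sqrt5]}\tfrac34(1-a^2)\,d\varphi(a),\quad C_\varphi=\int_{[0,1/\sqrt5]}\tfrac{15}{8}(a-a^3)\,d\varphi(a). \]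
   Context: $\mathcal{A}_+=\{\sum_{n=0}^\infty a_nt^n : a_n\ge0,\ \text{the series converges in }L^2([-1,1])\}$ (real $L^2$ for Lebesgue measure, convergence of partial sums); it is a closed convex cone and $P_{\mathcal{A}_+}$ denotes the metric projection onto it (the unique nearest point). *)

theory Defs
  imports "HOL-Analysis.Analysis"
begin

definition in_L2 :: "(real \<Rightarrow> real) \<Rightarrow> bool" where
  "in_L2 f \<longleftrightarrow> set_borel_measurable lborel {-1..1} f \<and>
     set_integrable lborel {-1..1} (\<lambda>t. (f t)\<^sup>2)"

definition L2dist :: "(real \<Rightarrow> real) \<Rightarrow> (real \<Rightarrow> real) \<Rightarrow> real" where
  "L2dist f g = sqrt (LINT t:{-1..1}|lborel. (f t - g t)\<^sup>2)"

definition A_plus :: "(real \<Rightarrow> real) set" where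
  "A_plus = {f. in_L2 f \<and> (\<exists>a::nat \<Rightarrow> real. (\<forall>n. a n \<ge> 0) \<and>
      (\<lambda>N. L2dist f (\<lambda>t. \<Sum>n<N. a n * t ^ n)) \<longlonglongrightarrow> 0)}"

definition is_metric_projection ::
  "(real \<Rightarrow> real) set \<Rightarrow> (real \<Rightarrow> real) \<Rightarrow> (real \<Rightarrow> real) \<Rightarrow> bool" where
  "is_metric_projection K f g \<longleftrightarrow> g \<in> K \<and> (\<forall>h\<in>K. L2dist f g \<le> L2dist f h)"

end

theory Submission
  imports Defs
begin

(* The cone A_+ is convex and p = A + B t + C t^2 has nonnegative coefficients, so p is the nearest
   point to phi once the residual r = phi - p satisfies <r, t^k> <= 0 for all k, with equality for
   k < 3: then <r, q - p> <= 0 for every polynomial q with nonnegative coefficients, hence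
   ||phi - q|| >= ||phi - p||, and this inequality passes to L2-limits of such polynomials.
   By Fubini, <phi, t^k> is the dphi-integral of (1 - a^(k+1)) / (k+1) = <1_[a,1], t^k>, so <r, t^k> is
   the dphi-integral of the residual moment d_k(a) of the unit step 1_[a,1] against the quadratic whose
   coefficients are the integrands of A, B, C. An explicit computation gives d_k(a) = 0 for k < 3 and
   d_k(a) <= 0 for k >= 3 whenever 0 <= a <= 1/sqrt 5. *)

section \<open>The space L2 on [-1, 1]\<close>

lemma in_L2_continuous_on:
  assumes "continuous_on {-1..1} f"
  shows "in_L2 f"
  unfolding in_L2_def set_borel_measurable_def set_integrable_def
proof
  show "(\<lambda>x. indicator {-1..1::real} x *\<^sub>R f x) \<in> borel_measurable lborel"
    using borel_measurable_continuous_on_indicator[OF _ assms] by simp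
  show "integrable lborel (\<lambda>x. indicator {-1..1::real} x *\<^sub>R (f x)\<^sup>2)"
    by (intro borel_integrable_compact continuous_intros assms) auto
qed

lemma in_L2_mono_on:
  assumes "mono_on {-1..1} f"
  shows "in_L2 f"
  unfolding in_L2_def
proof
  have meas: "f \<in> borel_measurable (restrict_space lborel {-1..1})"
    using borel_measurable_mono_on_fnc[OF assms]
    by (simp add: measurable_cong_sets[OF sets_restrict_space_cong[OF sets_lborel] refl])
  then show "set_borel_measurable lborel {-1..1} f"
    unfolding set_borel_measurable_def by (simp add: borel_measurable_restrict_space_iff)
  define B where "B = max \<bar>f (-1)\<bar> \<bar>f 1\<bar>"
  have bound: "\<bar>f t\<bar> \<le> B" if "t \<in> {-1..1}" for t
    using mono_onD[OF assms, of "-1" t] mono_onD[OF assms, of t 1] that by (auto simp: B_def)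
  show "set_integrable lborel {-1..1} (\<lambda>t. (f t)\<^sup>2)"
  proof (rule set_integrable_bound[where f = "\<lambda>_. B\<^sup>2"])
    show "set_integrable lborel {-1..1::real} (\<lambda>_. B\<^sup>2)"
      by (simp add: set_integrable_def)
    show "set_borel_measurable lborel {-1..1} (\<lambda>t. (f t)\<^sup>2)"
      using borel_measurable_power[OF meas, of 2] unfolding set_borel_measurable_def
      by (simp add: borel_measurable_restrict_space_iff)
    show "AE t in lborel. t \<in> {-1..1} \<longrightarrow> norm ((f t)\<^sup>2) \<le> norm (B\<^sup>2)"
      using bound by (auto intro!: AE_I2 simp flip: abs_le_square_iff intro: order_trans[OF _ abs_ge_self])
  qed
qed

lemma set_integrable_L2_mult:
  assumes f: "in_L2 f" and g: "in_L2 g"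
  shows "set_integrable lborel {-1..1} (\<lambda>t. f t * g t)"
proof (rule set_integrable_bound[where f = "\<lambda>t. (f t)\<^sup>2 + (g t)\<^sup>2"])
  show "set_integrable lborel {-1..1} (\<lambda>t. (f t)\<^sup>2 + (g t)\<^sup>2)"
    using f g unfolding in_L2_def by (intro set_integral_add) auto
  have "(\<lambda>t. f t * g t) \<in> borel_measurable (restrict_space lborel {-1..1})"
    using f g unfolding in_L2_def set_borel_measurable_def
    by (intro borel_measurable_times) (simp_all add: borel_measurable_restrict_space_iff)
  then show "set_borel_measurable lborel {-1..1} (\<lambda>t. f t * g t)"
    unfolding set_borel_measurable_def by (simp add: borel_measurable_restrict_space_iff)
  have "\<bar>x * y\<bar> \<le> x\<^sup>2 + y\<^sup>2" for x y :: real
  proof -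
    have "2 * \<bar>x * y\<bar> \<le> x\<^sup>2 + y\<^sup>2"
      using sum_squares_bound[of "\<bar>x\<bar>" "\<bar>y\<bar>"] by (simp add: abs_mult mult.assoc)
    then show ?thesis using abs_ge_zero[of "x * y"] by linarith
  qed
  then show "AE t in lborel. t \<in> {-1..1} \<longrightarrow> norm (f t * g t) \<le> norm ((f t)\<^sup>2 + (g t)\<^sup>2)"
    by (auto intro!: AE_I2)
qed

lemma in_L2_diff:
  assumes f: "in_L2 f" and g: "in_L2 g"
  shows "in_L2 (\<lambda>t. f t - g t)"
  unfolding in_L2_def
proof
  have "(\<lambda>t. f t - g t) \<in> borel_measurable (restrict_space lborel {-1..1})"
    using f g unfolding in_L2_def set_borel_measurable_def
    by (intro borel_measurable_diff) (simp_all add: borel_measurable_restrict_space_iff)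
  then show "set_borel_measurable lborel {-1..1} (\<lambda>t. f t - g t)"
    unfolding set_borel_measurable_def by (simp add: borel_measurable_restrict_space_iff)
  have "set_integrable lborel {-1..1} (\<lambda>t. (f t)\<^sup>2 - 2 * (f t * g t) + (g t)\<^sup>2)"
    using f g set_integrable_L2_mult[OF f g] unfolding in_L2_def
    by (intro set_integral_add set_integral_diff set_integrable_mult_right) auto
  moreover have "(\<lambda>t. (f t - g t)\<^sup>2) = (\<lambda>t. (f t)\<^sup>2 - 2 * (f t * g t) + (g t)\<^sup>2)"
    by (simp add: power2_diff algebra_simps)
  ultimately show "set_integrable lborel {-1..1} (\<lambda>t. (f t - g t)\<^sup>2)"
    by simp
qed

lemma in_L2_polynomial: "in_L2 (\<lambda>t. \<Sum>k<n. c k * t ^ k)"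
  by (intro in_L2_continuous_on continuous_intros)

lemma set_integral_square_add:
  assumes u: "in_L2 u" and v: "in_L2 v"
  shows "(LINT t:{-1..1}|lborel. (u t + v t)\<^sup>2)
    = (LINT t:{-1..1}|lborel. (u t)\<^sup>2) + 2 * (LINT t:{-1..1}|lborel. u t * v t)
      + (LINT t:{-1..1}|lborel. (v t)\<^sup>2)"
proof -
  have "(\<lambda>t. (u t + v t)\<^sup>2) = (\<lambda>t. ((u t)\<^sup>2 + 2 * (u t * v t)) + (v t)\<^sup>2)"
    by (simp add: power2_sum algebra_simps)
  then show ?thesis
    using u v set_integrable_L2_mult[OF u v] unfolding in_L2_def
    by (simp add: set_integral_add set_integrable_mult_right)
qed

lemma L2dist_nonneg: "0 \<le> L2dist f g"
  unfolding L2dist_def set_lebesgue_integral_def by (simp add: integral_nonneg_AE)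

lemma L2dist_squared: "(L2dist f g)\<^sup>2 = (LINT t:{-1..1}|lborel. (f t - g t)\<^sup>2)"
  unfolding L2dist_def set_lebesgue_integral_def by (simp add: integral_nonneg_AE)

lemma L2dist_squared_le:
  assumes "e > 0" and f: "in_L2 f" and g: "in_L2 g" and h: "in_L2 h"
  shows "(L2dist f h)\<^sup>2 \<le> (1 + e) * (L2dist f g)\<^sup>2 + (1 + 1 / e) * (L2dist g h)\<^sup>2"
proof -
  have peter_paul: "(x + y)\<^sup>2 \<le> (1 + e) * x\<^sup>2 + (1 + 1 / e) * y\<^sup>2" for x y :: real
  proof -
    have "(1 + e) * x\<^sup>2 + (1 + 1 / e) * y\<^sup>2 - (x + y)\<^sup>2 = (e * x - y)\<^sup>2 / e"
      using \<open>e > 0\<close> by (simp add: field_simps power2_eq_square)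
    moreover have "0 \<le> (e * x - y)\<^sup>2 / e"
      using \<open>e > 0\<close> by simp
    ultimately show ?thesis
      by linarith
  qed
  have fg: "in_L2 (\<lambda>t. f t - g t)" and gh: "in_L2 (\<lambda>t. g t - h t)"
    using f g h by (simp_all add: in_L2_diff)
  have "(L2dist f h)\<^sup>2
      \<le> (LINT t:{-1..1}|lborel. (1 + e) * (f t - g t)\<^sup>2 + (1 + 1 / e) * (g t - h t)\<^sup>2)"
    unfolding L2dist_squared
    using in_L2_diff[OF f h] fg gh peter_paul[of "f t - g t" "g t - h t" for t] unfolding in_L2_def
    by (intro set_integral_mono set_integral_add set_integrable_mult_right) auto
  also have "\<dots> = (1 + e) * (L2dist f g)\<^sup>2 + (1 + 1 / e) * (L2dist g h)\<^sup>2"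
    using fg gh unfolding L2dist_squared in_L2_def
    by (simp add: set_integral_add set_integral_mult_right set_integrable_mult_right)
  finally show ?thesis .
qed

lemma L2dist_triangle:
  assumes f: "in_L2 f" and g: "in_L2 g" and h: "in_L2 h"
  shows "L2dist f h \<le> L2dist f g + L2dist g h"
proof (rule field_le_epsilon)
  fix \<delta> :: real assume "\<delta> > 0"
  define a b where "a = L2dist f g + \<delta> / 2" and "b = L2dist g h + \<delta> / 2"
  have a: "L2dist f g \<le> a" "0 < a" and b: "L2dist g h \<le> b" "0 < b"
    using \<open>\<delta> > 0\<close> L2dist_nonneg[of f g] L2dist_nonneg[of g h] by (auto simp: a_def b_def)
  \<comment> \<open>with \<open>e = b / a\<close> the bound of \<open>L2dist_squared_le\<close> becomes the perfect square \<open>(a + b)\<^sup>2\<close>\<close>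
  have "(L2dist f h)\<^sup>2 \<le> (1 + b / a) * (L2dist f g)\<^sup>2 + (1 + a / b) * (L2dist g h)\<^sup>2"
    using L2dist_squared_le[OF divide_pos_pos[OF b(2) a(2)] f g h] by simp
  also have "\<dots> \<le> (1 + b / a) * a\<^sup>2 + (1 + a / b) * b\<^sup>2"
    using a b L2dist_nonneg[of f g] L2dist_nonneg[of g h]
    by (intro add_mono mult_left_mono power_mono) simp_all
  also have "\<dots> = (a + b)\<^sup>2"
    using a b by (simp add: field_simps power2_eq_square)
  finally have "L2dist f h \<le> a + b"
    by (rule power2_le_imp_le) (use a b in simp)
  then show "L2dist f h \<le> L2dist f g + L2dist g h + \<delta>"
    by (simp add: a_def b_def)
qed

section \<open>Projection onto the cone of power series with nonnegative coefficients\<close>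

lemma polynomial_in_A_plus:
  assumes "\<forall>k<n. 0 \<le> c k"
  shows "(\<lambda>t. \<Sum>k<n. c k * t ^ k) \<in> A_plus"
  unfolding A_plus_def
proof (intro CollectI conjI exI[of _ "\<lambda>k. if k < n then c k else 0"] allI in_L2_polynomial)
  show "0 \<le> (if k < n then c k else 0)" for k
    using assms by simp
  have "(\<lambda>t. \<Sum>k<N. (if k < n then c k else 0) * t ^ k) = (\<lambda>t. \<Sum>k<n. c k * t ^ k)"
    if "n \<le> N" for N
    using that by (intro ext sum.mono_neutral_cong_right) auto
  then have "\<forall>\<^sub>F N in sequentially.
      L2dist (\<lambda>t. \<Sum>k<n. c k * t ^ k) (\<lambda>t. \<Sum>k<N. (if k < n then c k else 0) * t ^ k) = 0"
    unfolding eventually_sequentially by (intro exI[of _ n]) (auto simp: L2dist_def)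
  then show "(\<lambda>N. L2dist (\<lambda>t. \<Sum>k<n. c k * t ^ k)
      (\<lambda>t. \<Sum>k<N. (if k < n then c k else 0) * t ^ k)) \<longlonglongrightarrow> 0"
    by (rule tendsto_eventually)
qed

lemma set_integral_mult_polynomial:
  assumes "in_L2 u"
  shows "(LINT t:{-1..1}|lborel. u t * (\<Sum>k<n. c k * t ^ k))
    = (\<Sum>k<n. c k * (LINT t:{-1..1}|lborel. u t * t ^ k))"
proof -
  have "set_integrable lborel {-1..1} (\<lambda>t. u t * t ^ k)" for k
    by (rule set_integrable_L2_mult[OF assms in_L2_continuous_on]) (intro continuous_intros)
  then show ?thesis
    unfolding set_lebesgue_integral_def set_integrable_def
    by (simp add: sum_distrib_left mult_ac flip: Bochner_Integration.integral_sum integral_mult_right)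
qed

lemma L2dist_le_nonneg_polynomial:
  fixes f :: "real \<Rightarrow> real" and c a :: "nat \<Rightarrow> real" and n N :: nat
  defines "p \<equiv> \<lambda>t. \<Sum>k<n. c k * t ^ k"
  assumes f: "in_L2 f"
    and nonpos: "\<forall>k. (LINT t:{-1..1}|lborel. (f t - p t) * t ^ k) \<le> 0"
    and zero: "\<forall>k<n. (LINT t:{-1..1}|lborel. (f t - p t) * t ^ k) = 0"
    and a: "\<forall>k<N. 0 \<le> a k"
  shows "L2dist f p \<le> L2dist f (\<lambda>t. \<Sum>k<N. a k * t ^ k)"
proof -
  define q where "q = (\<lambda>t. \<Sum>k<N. a k * t ^ k)"
  define u where "u = (\<lambda>t. f t - p t)"
  have u: "in_L2 u" and pq: "in_L2 (\<lambda>t. p t - q t)"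
    unfolding u_def p_def q_def by (intro in_L2_diff f in_L2_polynomial)+
  \<comment> \<open>the residual \<open>f - p\<close> is orthogonal to \<open>p\<close> and has nonpositive inner product with \<open>q\<close>\<close>
  have "(LINT t:{-1..1}|lborel. u t * (p t - q t))
      = (LINT t:{-1..1}|lborel. u t * p t) - (LINT t:{-1..1}|lborel. u t * q t)"
    unfolding right_diff_distrib p_def q_def
    by (intro set_integral_diff set_integrable_L2_mult u in_L2_polynomial)
  also have "\<dots> = - (\<Sum>k<N. a k * (LINT t:{-1..1}|lborel. u t * t ^ k))"
    using zero unfolding p_def q_def set_integral_mult_polynomial[OF u] by (simp add: u_def p_def)
  finally have orth: "0 \<le> (LINT t:{-1..1}|lborel. u t * (p t - q t))"
    using a nonpos by (auto simp: u_def p_def intro!: sum_nonpos mult_nonneg_nonpos)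
  have "(L2dist f q)\<^sup>2 = (LINT t:{-1..1}|lborel. (u t + (p t - q t))\<^sup>2)"
    by (simp add: L2dist_squared u_def)
  also have "\<dots> = (L2dist f p)\<^sup>2 + 2 * (LINT t:{-1..1}|lborel. u t * (p t - q t)) + (L2dist p q)\<^sup>2"
    using set_integral_square_add[OF u pq] by (simp add: L2dist_squared u_def)
  finally have "(L2dist f p)\<^sup>2 \<le> (L2dist f q)\<^sup>2"
    using orth by (simp add: zero_le_power2)
  then show ?thesis
    unfolding q_def by (rule power2_le_imp_le) (rule L2dist_nonneg)
qed

theorem is_metric_projection_A_plus_polynomial:
  fixes f :: "real \<Rightarrow> real" and c :: "nat \<Rightarrow> real" and n :: nat
  defines "p \<equiv> \<lambda>t. \<Sum>k<n. c k * t ^ k"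
  assumes f: "in_L2 f"
    and c: "\<forall>k<n. 0 \<le> c k"
    and nonpos: "\<forall>k. (LINT t:{-1..1}|lborel. (f t - p t) * t ^ k) \<le> 0"
    and zero: "\<forall>k<n. (LINT t:{-1..1}|lborel. (f t - p t) * t ^ k) = 0"
  shows "is_metric_projection A_plus f p"
  unfolding is_metric_projection_def
proof (intro conjI ballI)
  show "p \<in> A_plus"
    unfolding p_def using c by (rule polynomial_in_A_plus)
next
  fix h assume "h \<in> A_plus"
  then obtain a where h: "in_L2 h" and a: "\<forall>k. 0 \<le> a k"
    and lim: "(\<lambda>N. L2dist h (\<lambda>t. \<Sum>k<N. a k * t ^ k)) \<longlonglongrightarrow> 0"
    unfolding A_plus_def by blast
  have "L2dist f p \<le> L2dist f h + L2dist h (\<lambda>t. \<Sum>k<N. a k * t ^ k)" for N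
  proof -
    have "L2dist f p \<le> L2dist f (\<lambda>t. \<Sum>k<N. a k * t ^ k)"
      using L2dist_le_nonneg_polynomial[OF f nonpos[unfolded p_def] zero[unfolded p_def]] a
      unfolding p_def by blast
    also have "\<dots> \<le> L2dist f h + L2dist h (\<lambda>t. \<Sum>k<N. a k * t ^ k)"
      by (rule L2dist_triangle[OF f h in_L2_polynomial])
    finally show ?thesis .
  qed
  moreover have "(\<lambda>N. L2dist f h + L2dist h (\<lambda>t. \<Sum>k<N. a k * t ^ k)) \<longlonglongrightarrow> L2dist f h"
    using tendsto_add[OF tendsto_const lim] by simp
  ultimately show "L2dist f p \<le> L2dist f h"
    by (intro LIMSEQ_le_const) auto
qed

corollary is_metric_projection_A_plus_quadratic:
  assumes f: "in_L2 f" and "0 \<le> A" "0 \<le> B" "0 \<le> C"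
    and nonpos: "\<forall>k. (LINT t:{-1..1}|lborel. (f t - (A + B * t + C * t\<^sup>2)) * t ^ k) \<le> 0"
    and zero: "\<forall>k<3. (LINT t:{-1..1}|lborel. (f t - (A + B * t + C * t\<^sup>2)) * t ^ k) = 0"
  shows "is_metric_projection A_plus f (\<lambda>t. A + B * t + C * t\<^sup>2)"
proof -
  have quadratic: "(\<Sum>k<3. [A, B, C] ! k * t ^ k) = A + B * t + C * t\<^sup>2" for t :: real
    by (simp add: numeral_3_eq_3 power2_eq_square)
  have "is_metric_projection A_plus f (\<lambda>t. \<Sum>k<3. [A, B, C] ! k * t ^ k)"
  proof (rule is_metric_projection_A_plus_polynomial[OF f])
    show "\<forall>k<3. 0 \<le> [A, B, C] ! k"
      using assms by (auto simp: less_Suc_eq numeral_3_eq_3)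
    show "\<forall>k. (LINT t:{-1..1}|lborel. (f t - (\<Sum>k<3. [A, B, C] ! k * t ^ k)) * t ^ k) \<le> 0"
      unfolding quadratic by (rule nonpos)
    show "\<forall>k<3. (LINT t:{-1..1}|lborel. (f t - (\<Sum>k<3. [A, B, C] ! k * t ^ k)) * t ^ k) = 0"
      unfolding quadratic by (rule zero)
  qed
  then show ?thesis
    by (simp only: quadratic)
qed

section \<open>Moments\<close>

definition power_moment :: "nat \<Rightarrow> real" where
  "power_moment j = (1 - (-1) ^ Suc j) / Suc j"

lemma set_integral_power: "(LINT t:{-1..1}|lborel. t ^ j) = power_moment j"
  using integral_power[of "-1" 1 j]
  by (simp add: set_lebesgue_integral_def power_moment_def mult.commute)

lemma power_moment_even: "even j \<Longrightarrow> power_moment j = 2 / (real j + 1)"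
  by (simp add: power_moment_def add.commute)

lemma power_moment_odd: "odd j \<Longrightarrow> power_moment j = 0"
  by (simp add: power_moment_def)

lemma set_integral_quadratic_mult_power:
  "(LINT t:{-1..1}|lborel. (A + B * t + C * t\<^sup>2) * t ^ k)
    = A * power_moment k + B * power_moment (k + 1) + C * power_moment (k + 2)"
proof -
  have int: "set_integrable lborel {-1..1::real} (\<lambda>t. c * t ^ j)" for c j
    unfolding set_integrable_def by (intro borel_integrable_compact continuous_intros) auto
  have "(LINT t:{-1..1}|lborel. (A + B * t + C * t\<^sup>2) * t ^ k)
      = (LINT t:{-1..1}|lborel. A * t ^ k + B * t ^ (k + 1) + C * t ^ (k + 2))"
    by (simp add: algebra_simps power2_eq_square)
  also have "\<dots> = (LINT t:{-1..1}|lborel. A * t ^ k + B * t ^ (k + 1))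
      + (LINT t:{-1..1}|lborel. C * t ^ (k + 2))"
    by (intro set_integral_add int)
  also have "(LINT t:{-1..1}|lborel. A * t ^ k + B * t ^ (k + 1))
      = (LINT t:{-1..1}|lborel. A * t ^ k) + (LINT t:{-1..1}|lborel. B * t ^ (k + 1))"
    by (intro set_integral_add int)
  finally show ?thesis
    by (simp only: set_integral_mult_right set_integral_power)
qed

(* d_k(a) = <1_[a,1] - p_a, t^k>, where p_a is the quadratic of the theorem for the point mass at a. *)
definition moment_defect :: "nat \<Rightarrow> real \<Rightarrow> real" where
  "moment_defect k a = (1 - a ^ Suc k) / Suc k - (4 - 9 * a + 5 * a ^ 3) / 8 * power_moment k
     - 3 / 4 * (1 - a\<^sup>2) * power_moment (k + 1) - 15 / 8 * (a - a ^ 3) * power_moment (k + 2)"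

lemma moment_defect_eq_0: "k < 3 \<Longrightarrow> moment_defect k a = 0"
  by (auto simp: less_Suc_eq numeral_3_eq_3 moment_defect_def power_moment_def
      field_simps power2_eq_square power3_eq_cube)

lemma moment_defect_even:
  assumes "even k"
  shows "moment_defect k a = a * (12 - 6 * real k + 10 * real k * a\<^sup>2 - 4 * (real k + 3) * a ^ k)
    / (4 * (real k + 1) * (real k + 3))"
proof -
  have "power_moment k = 2 / (real k + 1)" "power_moment (k + 1) = 0"
    "power_moment (k + 2) = 2 / (real k + 3)"
    using assms by (simp_all add: power_moment_even power_moment_odd add.commute)
  then have "moment_defect k a = (1 - a * a ^ k) / (real k + 1)
      - (4 - 9 * a + 5 * a ^ 3) / 8 * (2 / (real k + 1)) - 15 / 8 * (a - a ^ 3) * (2 / (real k + 3))"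
    by (simp add: moment_defect_def add.commute)
  also have "\<dots> = a * (12 - 6 * real k + 10 * real k * a\<^sup>2 - 4 * (real k + 3) * a ^ k)
      / (4 * (real k + 1) * (real k + 3))"
    by (simp add: divide_simps) (simp add: algebra_simps power2_eq_square power3_eq_cube)
  finally show ?thesis .
qed

lemma moment_defect_odd:
  assumes "odd k"
  shows "moment_defect k a = (1 - a ^ Suc k) / (real k + 1) - 3 / 2 * (1 - a\<^sup>2) / (real k + 2)"
proof -
  have "power_moment k = 0" "power_moment (k + 1) = 2 / (real k + 2)" "power_moment (k + 2) = 0"
    using assms by (simp_all add: power_moment_even power_moment_odd add.commute)
  moreover have "3 / 4 * (1 - a\<^sup>2) * (2 / (real k + 2)) = 3 / 2 * (1 - a\<^sup>2) / (real k + 2)"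
    by (simp add: divide_simps) (simp add: algebra_simps)
  ultimately show ?thesis
    by (simp add: moment_defect_def add.commute)
qed

lemma moment_defect_nonpos_even:
  assumes "even k" and "0 \<le> a" and "a\<^sup>2 \<le> 1 / 5"
  shows "moment_defect k a \<le> 0"
proof (cases "k < 3")
  case True
  then show ?thesis by (simp add: moment_defect_eq_0)
next
  case False
  with \<open>even k\<close> have "k \<ge> 4" by presburger
  then have "real k \<ge> 4" by simp
  have "12 - 6 * real k + 10 * real k * a\<^sup>2 - 4 * (real k + 3) * a ^ k
      \<le> 12 - 6 * real k + 10 * real k * a\<^sup>2"
    using \<open>0 \<le> a\<close> by simp
  also have "\<dots> \<le> 12 - 4 * real k"
    using \<open>real k \<ge> 4\<close> mult_left_mono[OF \<open>a\<^sup>2 \<le> 1 / 5\<close>, of "10 * real k"] by simp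
  also have "\<dots> < 0"
    using \<open>real k \<ge> 4\<close> by simp
  finally show ?thesis
    unfolding moment_defect_even[OF \<open>even k\<close>] using \<open>0 \<le> a\<close>
    by (intro divide_nonpos_pos mult_nonneg_nonpos) auto
qed

lemma moment_defect_nonpos_odd:
  assumes "odd k" and "0 \<le> a" and "a\<^sup>2 \<le> 1 / 5"
  shows "moment_defect k a \<le> 0"
proof -
  obtain j where k: "k = 2 * j + 1"
    using \<open>odd k\<close> by (rule oddE)
  define x where "x = a\<^sup>2"
  have "0 \<le> x" "x \<le> 1 / 5"
    using assms by (simp_all add: x_def)
  have "Suc k = 2 * (j + 1)"
    using k by simp
  then have "a ^ Suc k = x ^ (j + 1)"
    unfolding x_def by (metis power_mult)
  then have "moment_defect k a = (1 - x ^ (j + 1)) / (real k + 1) - 3 / 2 * (1 - x) / (real k + 2)"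
    by (simp add: moment_defect_odd[OF \<open>odd k\<close>] x_def)
  also have "\<dots> = (1 - x ^ (j + 1)) / (2 * real j + 2) - 3 / 2 * (1 - x) / (2 * real j + 3)"
    unfolding k by (simp add: add.commute)
  finally have defect: "moment_defect k a = \<dots>" .
  consider "j = 0" | "j = 1" | "j \<ge> 2" by linarith
  then show ?thesis
  proof cases
    case 1
    then show ?thesis by (simp add: defect)
  next
    case 2
    \<comment> \<open>the binding case \<open>k = 3\<close>: this is where the bound \<open>a \<le> 1 / \<surd>5\<close> comes from\<close>
    have "moment_defect k a = (1 - x) * (5 * x - 1) / 20"
      by (simp add: defect 2 field_simps power2_eq_square)
    also have "\<dots> \<le> 0"
      using \<open>x \<le> 1 / 5\<close> by (intro divide_nonpos_pos mult_nonneg_nonpos) auto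
    finally show ?thesis .
  next
    case 3
    have "(1 - x ^ (j + 1)) / (2 * real j + 2) \<le> 1 / (2 * real j + 2)"
      using \<open>0 \<le> x\<close> by (intro divide_right_mono) auto
    also have "\<dots> \<le> 6 / 5 / (2 * real j + 3)"
      using 3 by (simp add: field_simps)
    also have "\<dots> \<le> 3 / 2 * (1 - x) / (2 * real j + 3)"
      using \<open>x \<le> 1 / 5\<close> by (intro divide_right_mono) auto
    finally show ?thesis by (simp add: defect)
  qed
qed

lemma moment_defect_nonpos: "0 \<le> a \<Longrightarrow> a\<^sup>2 \<le> 1 / 5 \<Longrightarrow> moment_defect k a \<le> 0"
  using moment_defect_nonpos_even moment_defect_nonpos_odd by blast

lemma step_coefficients_nonneg:
  fixes a :: real
  assumes "0 \<le> a" and "a\<^sup>2 \<le> 1 / 5"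
  shows "0 \<le> (4 - 9 * a + 5 * a ^ 3) / 8" and "0 \<le> 3 / 4 * (1 - a\<^sup>2)" and "0 \<le> 15 / 8 * (a - a ^ 3)"
proof -
  have "a\<^sup>2 \<le> (1 / 2)\<^sup>2"
    using assms(2) by (simp add: power2_eq_square)
  then have "a \<le> 1 / 2"
    by (rule power2_le_imp_le) simp
  have "0 \<le> (1 - a) * (4 - 5 * a - 5 * a\<^sup>2)"
    using \<open>a \<le> 1 / 2\<close> assms by (intro mult_nonneg_nonneg) auto
  then show "0 \<le> (4 - 9 * a + 5 * a ^ 3) / 8"
    by (simp add: algebra_simps power2_eq_square power3_eq_cube)
  show "0 \<le> 3 / 4 * (1 - a\<^sup>2)"
    using assms by simp
  have "0 \<le> a * (1 - a\<^sup>2)"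
    using assms by simp
  then show "0 \<le> 15 / 8 * (a - a ^ 3)"
    by (simp add: algebra_simps power2_eq_square power3_eq_cube)
qed

section \<open>Measures given by a distribution function\<close>

lemma set_integral_nonneg:
  fixes f :: "'a \<Rightarrow> real"
  assumes "\<And>x. x \<in> A \<Longrightarrow> 0 \<le> f x"
  shows "0 \<le> (LINT x:A|M. f x)"
  unfolding set_lebesgue_integral_def
  using assms by (intro integral_nonneg_AE AE_I2) (simp add: indicator_def)

lemma set_integral_nonpos:
  fixes f :: "'a \<Rightarrow> real"
  assumes "\<And>x. x \<in> A \<Longrightarrow> f x \<le> 0"
  shows "(LINT x:A|M. f x) \<le> 0"
  using set_integral_nonneg[of A "\<lambda>x. - f x" M] assms by (simp add: set_lebesgue_integral_def)

lemma set_integrable_continuous_on_compact: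
  fixes M :: "'a::t2_space measure" and g :: "'a \<Rightarrow> real"
  assumes "finite_measure M" and sets: "sets M = sets borel"
    and "compact S" and g: "continuous_on S g"
  shows "set_integrable M S g"
  unfolding set_integrable_def
proof -
  interpret finite_measure M by fact
  obtain B where B: "\<forall>x\<in>S. norm (g x) \<le> B"
    using compact_imp_bounded[OF compact_continuous_image[OF g \<open>compact S\<close>]]
    by (auto simp: bounded_iff)
  show "integrable M (\<lambda>x. indicator S x *\<^sub>R g x)"
  proof (rule integrable_const_bound[where B = "\<bar>B\<bar>"])
    show "AE x in M. norm (indicator S x *\<^sub>R g x) \<le> \<bar>B\<bar>"
      using B by (intro AE_I2) (auto simp: indicator_def)
    show "(\<lambda>x. indicator S x *\<^sub>R g x) \<in> borel_measurable M"
      using borel_measurable_continuous_on_indicator[OF _ g] \<open>compact S\<close>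
      by (simp add: measurable_cong_sets[OF sets refl] compact_imp_closed)
  qed
qed

lemma finite_measure_cdf:
  fixes M :: "real measure"
  assumes sets: "sets M = sets borel"
    and cdf: "\<forall>t\<in>{-1..1}. emeasure M {-1..t} = ennreal (\<phi> t)"
    and supp: "emeasure M (UNIV - {-1..1}) = 0"
  shows "finite_measure M"
proof (rule finite_measureI)
  have "emeasure M (space M) = emeasure M {-1..1} + emeasure M (UNIV - {-1..1})"
    using sets_eq_imp_space_eq[OF sets] sets by (subst plus_emeasure) auto
  then show "emeasure M (space M) \<noteq> \<infinity>"
    using cdf supp by simp
qed

lemma measure_atMost_eq_cdf:
  fixes M :: "real measure"
  assumes sets: "sets M = sets borel"
    and cdf: "\<forall>t\<in>{-1..1}. emeasure M {-1..t} = ennreal (\<phi> t)"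
    and supp: "emeasure M (UNIV - {-1..1}) = 0"
    and t: "t \<in> {-1..1}" and "0 \<le> \<phi> t"
  shows "measure M {..t} = \<phi> t"
proof -
  have "emeasure M {..<-1} \<le> emeasure M (UNIV - {-1..1})"
    using sets by (intro emeasure_mono) auto
  then have "emeasure M {..<-1} = 0"
    using supp by simp
  moreover have "emeasure M {..t} = emeasure M {-1..t} + emeasure M {..<-1}"
    using t sets by (subst plus_emeasure) (auto intro: arg_cong[where f = "emeasure M"])
  ultimately show ?thesis
    using cdf t \<open>0 \<le> \<phi> t\<close> by (simp add: measure_def)
qed

lemma AE_mem_cdf_support:
  fixes M :: "real measure"
  assumes sets: "sets M = sets borel"
    and cdf: "\<forall>t\<in>{-1..1}. emeasure M {-1..t} = ennreal (\<phi> t)"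
    and supp: "emeasure M (UNIV - {-1..1}) = 0"
    and zero: "\<forall>t\<in>{-1..<0}. \<phi> t = 0"
    and b: "0 \<le> b" "b \<le> 1" "\<phi> b = \<phi> 1"
  shows "AE a in M. a \<in> {0..b}"
proof (rule AE_I')
  have union: "{-1..<0} = (\<Union>n. {-1..-1 / real (Suc n)})"
  proof (intro antisym subsetI)
    fix x :: real assume "x \<in> {-1..<0}"
    then obtain n where "inverse (real (Suc n)) < - x"
      using reals_Archimedean[of "-x"] by auto
    with \<open>x \<in> {-1..<0}\<close> have "x \<in> {-1..-1 / real (Suc n)}"
      by (simp add: divide_inverse)
    then show "x \<in> (\<Union>n. {-1..-1 / real (Suc n)})"
      by blast
  next
    fix x :: real assume "x \<in> (\<Union>n. {-1..-1 / real (Suc n)})"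
    then obtain n where "-1 \<le> x" "x \<le> -1 / real (Suc n)"
      by auto
    moreover have "-1 / real (Suc n) < 0"
      by simp
    ultimately show "x \<in> {-1..<0}"
      unfolding atLeastLessThan_iff by linarith
  qed
  have "emeasure M {-1..-1 / real (Suc n)} = 0" for n
  proof -
    have "-1 / real (Suc n) \<in> {-1..1}" "-1 / real (Suc n) \<in> {-1..<0}"
      by (auto simp: divide_simps)
    then show ?thesis
      using cdf zero by simp
  qed
  then have "emeasure M {-1..<0} = 0"
    unfolding union using sets by (intro emeasure_UN_eq_0) auto
  moreover have "emeasure M {b<..1} = 0"
  proof -
    have "b \<in> {-1..1}"
      using b by simp
    then have "emeasure M {-1..b} = emeasure M {-1..1}"
      using cdf b(3) by simp
    moreover have "{b<..1} = {-1..1} - {-1..b}"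
      using b by auto
    ultimately show ?thesis
      using sets \<open>b \<in> {-1..1}\<close> cdf by (simp add: emeasure_Diff)
  qed
  moreover have "UNIV - {-1..1} \<in> sets M" "{-1..<0} \<in> sets M" "{b<..1} \<in> sets M"
    using sets by simp_all
  ultimately show "(UNIV - {-1..1}) \<union> {-1..<0} \<union> {b<..1} \<in> null_sets M"
    using supp by (intro null_sets.Un null_setsI)
  show "{a \<in> space M. a \<notin> {0..b}} \<subseteq> (UNIV - {-1..1}) \<union> {-1..<0} \<union> {b<..1}"
    by auto
qed

lemma integral_cdf_mult_power:
  fixes M :: "real measure"
  assumes "finite_measure M" and sets: "sets M = sets borel" and AE: "AE a in M. a \<in> {-1..1}"
  shows "(LINT t:{-1..1}|lborel. measure M {..t} * t ^ k) = (\<integral>a. (1 - a ^ Suc k) / Suc k \<partial>M)"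
proof -
  interpret finite_measure M by fact
  interpret pair_sigma_finite M lborel ..
  have space: "space M = UNIV"
    using sets_eq_imp_space_eq[OF sets] by simp
  define D where "D = {x :: real \<times> real. fst x \<le> snd x}"
  define g where "g a t = indicator {..t} a * (indicator {-1..1} t * t ^ k)" for a t :: real
  have g: "case_prod g = (\<lambda>x. indicator D x * (indicator {-1..1} (snd x) * snd x ^ k))"
    by (auto simp: fun_eq_iff g_def D_def indicator_def)
  have "D \<in> sets (borel \<Otimes>\<^sub>M borel)"
    unfolding D_def borel_prod by (intro borel_closed closed_Collect_le continuous_intros)
  then have "case_prod g \<in> borel_measurable (borel \<Otimes>\<^sub>M borel)"
    unfolding g by measurable
  moreover have "sets (M \<Otimes>\<^sub>M lborel) = sets (borel \<Otimes>\<^sub>M borel)"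
    using sets by (intro sets_pair_measure_cong) auto
  ultimately have meas: "case_prod g \<in> borel_measurable (M \<Otimes>\<^sub>M lborel)"
    using measurable_cong_sets by blast
  have "integrable (M \<Otimes>\<^sub>M lborel) (case_prod g)"
  proof (rule Bochner_Integration.integrable_bound[OF integrable_real_indicator meas])
    show "space M \<times> {-1..1::real} \<in> sets (M \<Otimes>\<^sub>M lborel)"
      by (intro pair_measureI) auto
    have "emeasure (M \<Otimes>\<^sub>M lborel) (space M \<times> {-1..1::real})
        = emeasure M (space M) * emeasure lborel {-1..1::real}"
      by (intro sigma_finite_measure.emeasure_pair_measure_Times lborel.sigma_finite_measure_axioms)
        auto
    then show "emeasure (M \<Otimes>\<^sub>M lborel) (space M \<times> {-1..1::real}) < \<infinity>"
      by (simp add: ennreal_mult_eq_top_iff top.not_eq_extremum[symmetric])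
    have "\<bar>t ^ k\<bar> \<le> 1" if "t \<in> {-1..1}" for t :: real
      using that by (simp add: power_abs) (intro power_le_one; auto)
    then show "AE x in M \<Otimes>\<^sub>M lborel.
        norm (case_prod g x) \<le> norm (indicat_real (space M \<times> {-1..1}) x)"
      by (intro AE_I2) (auto simp: g_def indicator_def space)
  qed
  then have "(\<integral>t. (\<integral>a. g a t \<partial>M) \<partial>lborel) = (\<integral>a. (\<integral>t. g a t \<partial>lborel) \<partial>M)"
    by (rule Fubini_integral)
  also have "(\<lambda>t. \<integral>a. g a t \<partial>M) = (\<lambda>t. indicator {-1..1} t *\<^sub>R (measure M {..t} * t ^ k))"
    using sets by (simp add: g_def fun_eq_iff)
  also have "(\<integral>a. (\<integral>t. g a t \<partial>lborel) \<partial>M) = (\<integral>a. (1 - a ^ Suc k) / Suc k \<partial>M)"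
  proof (rule integral_cong_AE)
    show "(\<lambda>a. \<integral>t. g a t \<partial>lborel) \<in> borel_measurable M"
      using lborel.borel_measurable_lebesgue_integral[OF meas] .
    show "(\<lambda>a. (1 - a ^ Suc k) / Suc k) \<in> borel_measurable M"
      using sets by (simp add: measurable_cong_sets[OF sets refl])
    have "(\<integral>t. g a t \<partial>lborel) = (1 - a ^ Suc k) / Suc k" if "a \<in> {-1..1}" for a
    proof -
      have "(\<lambda>t. g a t) = (\<lambda>t. t ^ k * indicator {a..1} t)"
        using that by (auto simp: fun_eq_iff g_def indicator_def)
      then show ?thesis
        using that integral_power[of a 1 k] by simp
    qed
    then show "AE a in M. (\<integral>t. g a t \<partial>lborel) = (1 - a ^ Suc k) / Suc k"
      using AE by auto
  qed
  finally show ?thesis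
    by (simp add: set_lebesgue_integral_def)
qed

lemma set_integral_cdf_residual_mult_power:
  fixes M :: "real measure" and S :: "real set" and \<phi> :: "real \<Rightarrow> real"
  defines "p \<equiv> \<lambda>t. (LINT a:S|M. (4 - 9 * a + 5 * a ^ 3) / 8) + (LINT a:S|M. 3 / 4 * (1 - a\<^sup>2)) * t
      + (LINT a:S|M. 15 / 8 * (a - a ^ 3)) * t\<^sup>2"
  assumes fin: "finite_measure M" and sets: "sets M = sets borel"
    and S: "compact S" "S \<subseteq> {-1..1}" and AE: "AE a in M. a \<in> S"
    and cdf: "\<forall>t\<in>{-1..1}. \<phi> t = measure M {..t}" and \<phi>: "in_L2 \<phi>"
  shows "(LINT t:{-1..1}|lborel. (\<phi> t - p t) * t ^ k) = (LINT a:S|M. moment_defect k a)"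
proof -
  have int: "set_integrable M S g" if "continuous_on S g" for g :: "real \<Rightarrow> real"
    using set_integrable_continuous_on_compact[OF fin sets \<open>compact S\<close> that] .
  have AE_interval: "AE a in M. a \<in> {-1..1}"
    using AE by eventually_elim (use \<open>S \<subseteq> {-1..1}\<close> in blast)
  have "(LINT t:{-1..1}|lborel. \<phi> t * t ^ k) = (LINT t:{-1..1}|lborel. measure M {..t} * t ^ k)"
    using cdf by (intro set_lebesgue_integral_cong) auto
  also have "\<dots> = (\<integral>a. (1 - a ^ Suc k) / Suc k \<partial>M)"
    by (rule integral_cdf_mult_power[OF fin sets AE_interval])
  also have "\<dots> = (LINT a:S|M. (1 - a ^ Suc k) / Suc k)"
    unfolding set_lebesgue_integral_def
  proof (rule integral_cong_AE)
    have "S \<in> sets borel"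
      using \<open>compact S\<close> by (simp add: compact_imp_closed)
    then show "(\<lambda>a. indicator S a *\<^sub>R ((1 - a ^ Suc k) / Suc k)) \<in> borel_measurable M"
      by (simp add: measurable_cong_sets[OF sets refl])
    show "(\<lambda>a. (1 - a ^ Suc k) / Suc k) \<in> borel_measurable M"
      by (simp add: measurable_cong_sets[OF sets refl])
    show "AE a in M. (1 - a ^ Suc k) / Suc k = indicator S a *\<^sub>R ((1 - a ^ Suc k) / Suc k)"
      using AE by eventually_elim simp
  qed
  also have "\<dots> = (LINT a:S|M. moment_defect k a)
      + (LINT a:S|M. (4 - 9 * a + 5 * a ^ 3) / 8) * power_moment k
      + (LINT a:S|M. 3 / 4 * (1 - a\<^sup>2)) * power_moment (k + 1)
      + (LINT a:S|M. 15 / 8 * (a - a ^ 3)) * power_moment (k + 2)"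
    unfolding moment_defect_def
    by (simp add: int continuous_intros set_integral_diff set_integral_mult_left del: of_nat_Suc)
  also have "\<dots> = (LINT a:S|M. moment_defect k a) + (LINT t:{-1..1}|lborel. p t * t ^ k)"
    unfolding p_def set_integral_quadratic_mult_power by simp
  finally have "(LINT t:{-1..1}|lborel. \<phi> t * t ^ k)
      = (LINT a:S|M. moment_defect k a) + (LINT t:{-1..1}|lborel. p t * t ^ k)" .
  moreover have "in_L2 p" "in_L2 (\<lambda>t. t ^ k)"
    unfolding p_def by (intro in_L2_continuous_on continuous_intros)+
  ultimately show ?thesis
    using \<phi> by (simp add: left_diff_distrib set_integral_diff set_integrable_L2_mult)
qed

theorem corollary1p12:
  fixes \<phi> :: "real \<Rightarrow> real" and M :: "real measure"
  assumes nonneg: "\<forall>t\<in>{-1..1}. \<phi> t \<ge> 0"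
    and mono: "mono_on {-1..1} \<phi>"
    and rcont: "\<forall>t\<in>{-1..1}. continuous (at t within {t..1}) \<phi>"
    and zero: "\<forall>t\<in>{-1..<0}. \<phi> t = 0"
    and const: "\<forall>t\<in>{1 / sqrt 5..1}. \<phi> t = \<phi> 1"
    and M_sets: "sets M = sets borel"
    and M_cdf: "\<forall>t\<in>{-1..1}. emeasure M {-1..t} = ennreal (\<phi> t)"
    and M_supp: "emeasure M (UNIV - {-1..1}) = 0"
  shows "is_metric_projection A_plus \<phi>
     (\<lambda>t. (LINT a:{0..1 / sqrt 5}|M. (4 - 9 * a + 5 * a ^ 3) / 8)
        + (LINT a:{0..1 / sqrt 5}|M. 3 / 4 * (1 - a\<^sup>2)) * t
        + (LINT a:{0..1 / sqrt 5}|M. 15 / 8 * (a - a ^ 3)) * t\<^sup>2)"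
proof -
  define S where "S = {0..1 / sqrt 5 :: real}"
  define A B C where "A = (LINT a:S|M. (4 - 9 * a + 5 * a ^ 3) / 8)"
    and "B = (LINT a:S|M. 3 / 4 * (1 - a\<^sup>2))" and "C = (LINT a:S|M. 15 / 8 * (a - a ^ 3))"
  have S: "0 \<le> a \<and> a\<^sup>2 \<le> 1 / 5" if "a \<in> S" for a
    using that power_mono[of a "1 / sqrt 5" 2] by (simp add: S_def power_divide)
  have "\<phi> (1 / sqrt 5) = \<phi> 1"
    by (rule const[rule_format]) simp
  then have AE: "AE a in M. a \<in> S"
    unfolding S_def by (intro AE_mem_cdf_support[OF M_sets M_cdf M_supp zero]) simp_all
  have cdf: "\<forall>t\<in>{-1..1}. \<phi> t = measure M {..t}"
    using nonneg by (simp add: measure_atMost_eq_cdf[OF M_sets M_cdf M_supp])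
  have residual: "(LINT t:{-1..1}|lborel. (\<phi> t - (A + B * t + C * t\<^sup>2)) * t ^ k)
      = (LINT a:S|M. moment_defect k a)" for k
    unfolding A_def B_def C_def
    by (rule set_integral_cdf_residual_mult_power[OF finite_measure_cdf[OF M_sets M_cdf M_supp]
        M_sets _ _ AE cdf in_L2_mono_on[OF mono]]) (simp_all add: S_def)
  show ?thesis
    unfolding S_def[symmetric] A_def[symmetric] B_def[symmetric] C_def[symmetric]
  proof (rule is_metric_projection_A_plus_quadratic[OF in_L2_mono_on[OF mono]])
    show "0 \<le> A" "0 \<le> B" "0 \<le> C"
      unfolding A_def B_def C_def using S step_coefficients_nonneg by (blast intro: set_integral_nonneg)+
    show "\<forall>k. (LINT t:{-1..1}|lborel. (\<phi> t - (A + B * t + C * t\<^sup>2)) * t ^ k) \<le> 0"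
      unfolding residual using S moment_defect_nonpos by (blast intro: set_integral_nonpos)
    show "\<forall>k<3. (LINT t:{-1..1}|lborel. (\<phi> t - (A + B * t + C * t\<^sup>2)) * t ^ k) = 0"
      unfolding residual by (simp add: moment_defect_eq_0 set_lebesgue_integral_def)
  qed
qed

end
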